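(* Let $0<A<1$ and let $\theta\in C(\mathbb{R})$ with $\lim_{|x|\to\infty}\theta(x)=0$. Then there is a piecewise constant function $G>0$ on $\mathbb{R}$ such that $G(x)\ge\max(|\theta(x)|,\theta(x)^2)$ for all $x\in\mathbb{R}$, $G$ is even on $\mathbb{R}$ and nonincreasing on $[0,+\infty)$, $\lim_{x\to+\infty}G(x)=0$, and there is $\sigma>0$ such that for all $i\in\mathbb{N}$, $$(\rho_i*G)(x)\le\frac{\sigma}{1+i}G(x)\quad\text{for all }x\in\mathbb{R}.$$
   Context: $\lambda_i:=-1+(2i+1)A$ for $i\in\mathbb{N}$ (so $\lambda_0=A-1<0$ and $\lambda_i-\lambda_0=2iA$). For $i\ge1$, $\rho_i(z):=\frac{1}{2\sqrt{\lambda_i-\lambda_0}}e^{-\sqrt{\lambda_i-\lambda_0}|z|}$, and $\rho_0(z):=\frac{1}{2\sqrt{-\lambda_0}}e^{-\sqrt{-\lambda_0}|z|}$; $*$ denotes convolution on $\mathbb{R}$. *)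

theory Defs
  imports "HOL-Analysis.Analysis"
begin

definition lam :: "real \<Rightarrow> nat \<Rightarrow> real" where
  "lam A i = -1 + (2 * real i + 1) * A"

definition rho :: "real \<Rightarrow> nat \<Rightarrow> real \<Rightarrow> real" where
  "rho A i z =
     (if i = 0 then 1 / (2 * sqrt (- lam A 0)) * exp (- sqrt (- lam A 0) * \<bar>z\<bar>)
      else 1 / (2 * sqrt (lam A i - lam A 0)) * exp (- sqrt (lam A i - lam A 0) * \<bar>z\<bar>))"

definition conv :: "(real \<Rightarrow> real) \<Rightarrow> (real \<Rightarrow> real) \<Rightarrow> real \<Rightarrow> real" where
  "conv f g x = (LINT y|lborel. f (x - y) * g y)"

definition piecewise_constant :: "(real \<Rightarrow> real) \<Rightarrow> bool" where
  "piecewise_constant G \<longleftrightarrow>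
     (\<exists>S. (\<forall>a b. finite (S \<inter> {a..b})) \<and>
          (\<forall>x. x \<notin> S \<longrightarrow> (\<exists>e>0. \<forall>y. \<bar>y - x\<bar> < e \<longrightarrow> G y = G x)))"

end

theory Submission
  imports Defs "HOL-Real_Asymp.Real_Asymp"
begin

(*
  Let \<phi> = max |\<theta>| \<theta>\<^sup>2 and let H n be the supremum of \<phi> on |y| \<ge> n; it decreases to 0.
  Replace H by a positive decreasing majorant g that decays at most geometrically,
  g n \<le> exp (\<kappa> (m - n)) g m for n \<le> m, and put G x = g \<lfloor>|x|\<rfloor>. Then
  G y \<le> exp \<kappa> G x exp (\<kappa> |x - y|), so against the kernel exp (-a |z|) / (2a) with a \<ge> 2\<kappa>
  the convolution is at most exp \<kappa> G x / (a (a - \<kappa>)) \<le> 2 exp \<kappa> G x / a\<^sup>2.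
  For \<rho>\<^sub>i we have a\<^sup>2 = \<lambda>\<^sub>i - \<lambda>\<^sub>0 = 2iA (and a\<^sup>2 = 1 - A for i = 0), which gives the
  factor 1/(1 + i).
*)

lemma nn_integral_exp_neg_atLeast_0:
  fixes b :: real
  assumes "b > 0"
  shows "(\<integral>\<^sup>+y. ennreal (exp (-b*y) * indicator {0..} y) \<partial>lborel) = ennreal (1/b)"
proof -
  have "((\<lambda>y. exp (-b*y)) has_integral 1/b) {0..}"
    using has_integral_exp_minus_to_infinity[OF assms, of 0] by simp
  moreover have "(\<lambda>y. exp (-b*y) * indicator {0..} y) = (\<lambda>y::real. if y \<in> {0..} then exp (-b*y) else 0)"
    by (auto simp: indicator_def)
  ultimately have "((\<lambda>y. exp (-b*y) * indicator {0..} y) has_integral 1/b) UNIV"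
    by (simp only: has_integral_restrict_UNIV)
  then show ?thesis
    by (intro nn_integral_has_integral_lborel) auto
qed

lemma nn_integral_exp_neg_abs_le:
  fixes b x :: real
  assumes "b > 0"
  shows "(\<integral>\<^sup>+y. ennreal (exp (-b*\<bar>x-y\<bar>)) \<partial>lborel) \<le> ennreal (2/b)"
proof -
  define k where "k = (\<lambda>y::real. ennreal (exp (-b*y) * indicator {0..} y))"
  have [measurable]: "k \<in> borel_measurable borel" unfolding k_def by measurable
  have "(\<integral>\<^sup>+y. ennreal (exp (-b*\<bar>x-y\<bar>)) \<partial>lborel) = (\<integral>\<^sup>+y. ennreal (exp (-b*\<bar>y\<bar>)) \<partial>lborel)"
    using nn_integral_real_affine[of "\<lambda>y. ennreal (exp (-b*\<bar>y\<bar>))" "-1" x] by simp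
  \<comment> \<open>\<open>k (0 + (-1) * y)\<close> is \<open>k (-y)\<close> in the shape expected by \<open>nn_integral_real_affine\<close>\<close>
  also have "\<dots> \<le> (\<integral>\<^sup>+y. k y + k (0 + (-1) * y) \<partial>lborel)"
  proof (rule nn_integral_mono)
    show "ennreal (exp (-b*\<bar>y\<bar>)) \<le> k y + k (0 + (-1) * y)" for y
      by (cases "y \<ge> 0") (simp_all add: k_def add_increasing2)
  qed
  also have "\<dots> = (\<integral>\<^sup>+y. k y \<partial>lborel) + (\<integral>\<^sup>+y. k (0 + (-1) * y) \<partial>lborel)"
    by (intro nn_integral_add) auto
  also have "(\<integral>\<^sup>+y. k (0 + (-1) * y) \<partial>lborel) = (\<integral>\<^sup>+y. k y \<partial>lborel)"
    using nn_integral_real_affine[of k "-1" 0] by simp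
  also have "(\<integral>\<^sup>+y. k y \<partial>lborel) = ennreal (1/b)"
    unfolding k_def by (rule nn_integral_exp_neg_atLeast_0[OF assms])
  also have "ennreal (1/b) + ennreal (1/b) = ennreal (2/b)"
    using assms by (simp flip: ennreal_plus)
  finally show ?thesis .
qed

definition laplace_kernel :: "real \<Rightarrow> real \<Rightarrow> real" where
  "laplace_kernel a z = 1 / (2*a) * exp (-a*\<bar>z\<bar>)"

lemma rho_eq_laplace_kernel:
  "rho A i = laplace_kernel (sqrt (if i = 0 then 1 - A else 2 * real i * A))"
  by (auto simp: rho_def lam_def laplace_kernel_def algebra_simps)

(* No integrability hypothesis: the Bochner integral of a non-integrable function is 0. *)
lemma integral_le_of_exp_abs_bound:
  fixes f :: "real \<Rightarrow> real" and b K x :: real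
  assumes "b > 0" "K \<ge> 0" "\<And>y. f y \<ge> 0" "\<And>y. f y \<le> K * exp (-b*\<bar>x-y\<bar>)"
  shows "integral\<^sup>L lborel f \<le> K * (2/b)"
proof (cases "integrable lborel f")
  case False
  then show ?thesis
    using assms(1,2) by (simp add: not_integrable_integral_eq)
next
  case True
  have "ennreal (integral\<^sup>L lborel f) = (\<integral>\<^sup>+y. ennreal (f y) \<partial>lborel)"
    using True assms(3) by (intro nn_integral_eq_integral[symmetric] AE_I2) auto
  also have "\<dots> \<le> (\<integral>\<^sup>+y. ennreal K * ennreal (exp (-b*\<bar>x-y\<bar>)) \<partial>lborel)"
    using assms(2,4) by (intro nn_integral_mono) (simp add: ennreal_leI flip: ennreal_mult)
  also have "\<dots> = ennreal K * (\<integral>\<^sup>+y. ennreal (exp (-b*\<bar>x-y\<bar>)) \<partial>lborel)"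
    by (intro nn_integral_cmult) measurable
  also have "\<dots> \<le> ennreal K * ennreal (2/b)"
    by (intro mult_left_mono nn_integral_exp_neg_abs_le assms(1)) auto
  also have "\<dots> = ennreal (K * (2/b))"
    using assms(1,2) by (simp flip: ennreal_mult)
  finally show ?thesis
    using assms(1,2) by (subst (asm) ennreal_le_iff) auto
qed

lemma conv_laplace_kernel_le:
  fixes a \<kappa> C :: real and G :: "real \<Rightarrow> real"
  assumes "a > 0" "2*\<kappa> \<le> a" "C \<ge> 0" "\<And>x. G x \<ge> 0"
    and G_growth: "\<And>x y. G y \<le> C * G x * exp (\<kappa> * \<bar>x-y\<bar>)"
  shows "conv (laplace_kernel a) G x \<le> 2*C/a^2 * G x"
proof -
  define b where "b = a - \<kappa>"
  define K where "K = C * G x / (2*a)"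
  have b: "b > 0" "b \<ge> a/2" and K: "K \<ge> 0"
    using assms by (auto simp: b_def K_def)
  have "laplace_kernel a (x-y) * G y \<le> K * exp (-b*\<bar>x-y\<bar>)" for y
  proof -
    have "laplace_kernel a (x-y) * G y \<le> 1 / (2*a) * exp (-a*\<bar>x-y\<bar>) * (C * G x * exp (\<kappa> * \<bar>x-y\<bar>))"
      unfolding laplace_kernel_def using G_growth[of y x] assms(1)
      by (intro mult_left_mono) auto
    also have "\<dots> = K * exp (-b*\<bar>x-y\<bar>)"
      by (simp add: K_def b_def algebra_simps flip: exp_add)
    finally show ?thesis .
  qed
  then have "conv (laplace_kernel a) G x \<le> K * (2/b)"
    unfolding conv_def using b K assms(1,4)
    by (intro integral_le_of_exp_abs_bound) (auto simp: laplace_kernel_def)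
  also have "\<dots> = C * G x / (a*b)"
    using assms b by (simp add: K_def field_simps)
  also have "\<dots> \<le> C * G x / (a*(a/2))"
    using assms b by (intro divide_left_mono mult_left_mono mult_nonneg_nonneg) auto
  also have "\<dots> = 2*C/a^2 * G x"
    by (simp add: field_simps power2_eq_square)
  finally show ?thesis .
qed

(* The summand 1 keeps the majorant positive where H vanishes. *)
primrec slow_majorant :: "(nat \<Rightarrow> real) \<Rightarrow> real \<Rightarrow> nat \<Rightarrow> real" where
  "slow_majorant H k 0 = H 0 + 1"
| "slow_majorant H k (Suc n) = max (H (Suc n)) (exp (-k) * slow_majorant H k n)"

lemma slow_majorant_pos:
  assumes "\<And>n. H n \<ge> 0"
  shows "slow_majorant H k n > 0"
  by (induction n) (auto simp: assms add_nonneg_pos intro: max.strict_coboundedI2)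

lemma slow_majorant_ge: "H n \<le> slow_majorant H k n"
  by (cases n) auto

lemma slow_majorant_decseq:
  assumes "k \<ge> 0" "\<And>n. H n \<ge> 0" "decseq H"
  shows "decseq (slow_majorant H k)"
proof (rule decseq_SucI)
  fix n
  have "H (Suc n) \<le> slow_majorant H k n"
    using decseqD[OF assms(3), of n "Suc n"] slow_majorant_ge[of H n k] by simp
  moreover have "exp (-k) * slow_majorant H k n \<le> slow_majorant H k n"
    using slow_majorant_pos[OF assms(2)] assms(1) by (simp add: mult_le_cancel_right1)
  ultimately show "slow_majorant H k (Suc n) \<le> slow_majorant H k n" by simp
qed

lemma slow_majorant_growth:
  assumes "n \<le> m"
  shows "slow_majorant H k n \<le> exp (k * (real m - real n)) * slow_majorant H k m"
  using assms
proof (induction m rule: dec_induct)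
  case base
  then show ?case by simp
next
  case (step m)
  have "slow_majorant H k m = exp k * (exp (-k) * slow_majorant H k m)"
    by (simp add: exp_minus)
  also have "\<dots> \<le> exp k * slow_majorant H k (Suc m)"
    by (intro mult_left_mono) auto
  finally have "exp (k * (real m - real n)) * slow_majorant H k m
      \<le> exp (k * (real m - real n)) * (exp k * slow_majorant H k (Suc m))"
    by (intro mult_left_mono) auto
  also have "\<dots> = exp (k * (real (Suc m) - real n)) * slow_majorant H k (Suc m)"
    by (simp add: algebra_simps flip: exp_add)
  finally show ?case using step.IH by linarith
qed

lemma slow_majorant_tail_le:
  assumes "k \<ge> 0" "c \<ge> 0" "\<And>m. m > N \<Longrightarrow> H m \<le> c" "N \<le> n"
  shows "slow_majorant H k n \<le> max c (exp (-k * (real n - real N)) * slow_majorant H k N)"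
  using assms(4)
proof (induction n rule: dec_induct)
  case base
  then show ?case by simp
next
  case (step m)
  have "exp (-k) * slow_majorant H k m
      \<le> exp (-k) * max c (exp (-k * (real m - real N)) * slow_majorant H k N)"
    using step.IH by (intro mult_left_mono) auto
  also have "\<dots> = max (exp (-k) * c) (exp (-k * (real (Suc m) - real N)) * slow_majorant H k N)"
  proof -
    have "exp (-k) * exp (-k * (real m - real N)) = exp (-k * (real (Suc m) - real N))"
      by (simp add: algebra_simps flip: exp_add)
    then show ?thesis by (simp add: max_mult_distrib_left mult.assoc[symmetric])
  qed
  also have "\<dots> \<le> max c (exp (-k * (real (Suc m) - real N)) * slow_majorant H k N)"
    using assms(1,2) by (intro max.mono mult_left_le_one_le) auto
  finally show ?case
    using assms(3)[of "Suc m"] step.hyps by simp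
qed

lemma LIMSEQ_exp_neg_mult_shift_zero:
  fixes k t c :: real
  assumes "k > 0"
  shows "(\<lambda>n. exp (-k * (real n - t)) * c) \<longlonglongrightarrow> 0"
  using assms by real_asymp

lemma slow_majorant_tendsto_zero:
  assumes "k > 0" "\<And>n. H n \<ge> 0" "H \<longlonglongrightarrow> 0"
  shows "slow_majorant H k \<longlonglongrightarrow> 0"
proof (rule order_tendstoI)
  fix a :: real
  assume "a < 0"
  then show "\<forall>\<^sub>F n in sequentially. a < slow_majorant H k n"
    using slow_majorant_pos[of H, OF assms(2)] by (auto intro: always_eventually less_trans)
next
  fix e :: real
  assume e: "e > 0"
  then have "\<forall>\<^sub>F n in sequentially. H n < e/2"
    using assms(3) by (intro order_tendstoD) auto
  then obtain N where N: "\<And>m. m \<ge> N \<Longrightarrow> H m < e/2"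
    by (auto simp: eventually_sequentially)
  have bound: "slow_majorant H k n < e"
    if "exp (-k * (real n - real N)) * slow_majorant H k N < e" "N \<le> n" for n
  proof -
    have "slow_majorant H k n \<le> max (e/2) (exp (-k * (real n - real N)) * slow_majorant H k N)"
      using assms(1) e N that(2) by (intro slow_majorant_tail_le) (auto intro: less_imp_le)
    then show ?thesis
      using that(1) e by linarith
  qed
  have "(\<lambda>n. exp (-k * (real n - real N)) * slow_majorant H k N) \<longlonglongrightarrow> 0"
    using assms(1) by (rule LIMSEQ_exp_neg_mult_shift_zero)
  then have "\<forall>\<^sub>F n in sequentially. exp (-k * (real n - real N)) * slow_majorant H k N < e"
    using e by (intro order_tendstoD) auto
  moreover have "\<forall>\<^sub>F n in sequentially. N \<le> n"
    by (rule eventually_ge_at_top)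
  ultimately show "\<forall>\<^sub>F n in sequentially. slow_majorant H k n < e"
    by eventually_elim (rule bound)
qed

definition tail_sup :: "(real \<Rightarrow> real) \<Rightarrow> nat \<Rightarrow> real" where
  "tail_sup \<phi> n = Sup (\<phi> ` {y. real n \<le> \<bar>y\<bar>})"

lemma tail_sup_upper:
  assumes "bdd_above (range \<phi>)" "real n \<le> \<bar>y\<bar>"
  shows "\<phi> y \<le> tail_sup \<phi> n"
  unfolding tail_sup_def using assms by (intro cSup_upper bdd_above_mono[OF assms(1)]) auto

lemma tail_sup_decseq:
  assumes "bdd_above (range \<phi>)"
  shows "decseq (tail_sup \<phi>)"
proof (rule decseq_SucI)
  fix n
  show "tail_sup \<phi> (Suc n) \<le> tail_sup \<phi> n"
    unfolding tail_sup_def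
    by (intro cSup_subset_mono bdd_above_mono[OF assms] image_mono)
      (auto intro!: exI[of _ "real (Suc n)"])
qed

lemma tail_sup_tendsto_zero:
  assumes "bdd_above (range \<phi>)" "\<And>y. \<phi> y \<ge> 0" "(\<phi> \<longlongrightarrow> 0) at_infinity"
  shows "tail_sup \<phi> \<longlonglongrightarrow> 0"
proof (rule order_tendstoI)
  fix a :: real
  assume "a < 0"
  have "a < tail_sup \<phi> n" for n
    using \<open>a < 0\<close> assms(2)[of "real n"] tail_sup_upper[OF assms(1), of n "real n"] by simp
  then show "\<forall>\<^sub>F n in sequentially. a < tail_sup \<phi> n"
    by simp
next
  fix e :: real
  assume e: "e > 0"
  then have "\<forall>\<^sub>F y in at_infinity. \<phi> y < e/2"
    using assms(3) by (intro order_tendstoD) auto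
  then obtain R where R: "\<And>y. R \<le> \<bar>y\<bar> \<Longrightarrow> \<phi> y < e/2"
    by (auto simp: eventually_at_infinity)
  have tail_le: "tail_sup \<phi> n \<le> e/2" if "R \<le> real n" for n
    unfolding tail_sup_def
  proof (rule cSup_least)
    show "\<phi> ` {y. real n \<le> \<bar>y\<bar>} \<noteq> {}"
      by (auto intro!: exI[of _ "real n"])
    show "z \<le> e/2" if "z \<in> \<phi> ` {y. real n \<le> \<bar>y\<bar>}" for z
      using that \<open>R \<le> real n\<close> R by (force intro: less_imp_le)
  qed
  have "\<forall>\<^sub>F n in sequentially. R \<le> real n"
    using filterlim_real_sequentially unfolding filterlim_at_top by blast
  then show "\<forall>\<^sub>F n in sequentially. tail_sup \<phi> n < e"
    by eventually_elim (use tail_le e in fastforce)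
qed

lemma bounded_range_if_tendsto_at_infinity:
  fixes f :: "'a::{heine_borel,real_normed_vector} \<Rightarrow> 'b::real_normed_vector"
  assumes "continuous_on UNIV f" "(f \<longlongrightarrow> l) at_infinity"
  shows "bounded (range f)"
proof -
  have "\<forall>\<^sub>F y in at_infinity. dist (f y) l < 1"
    using assms(2) by (rule tendstoD) simp
  then obtain R where R: "\<And>y. R \<le> norm y \<Longrightarrow> dist (f y) l < 1"
    by (auto simp: eventually_at_infinity)
  have "f y \<in> f ` cball 0 R \<union> cball l 1" for y
    using R[of y] by (cases "R \<le> norm y") (auto simp: dist_commute)
  then have "range f \<subseteq> f ` cball 0 R \<union> cball l 1"
    by blast
  moreover have "compact (f ` cball 0 R)"
    by (intro compact_continuous_image continuous_on_subset[OF assms(1)]) auto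
  ultimately show ?thesis
    by (meson bounded_Un bounded_cball bounded_subset compact_imp_bounded)
qed

definition radial_step :: "(nat \<Rightarrow> real) \<Rightarrow> real \<Rightarrow> real" where
  "radial_step g x = g (nat \<lfloor>\<bar>x\<bar>\<rfloor>)"

lemma piecewise_constant_radial_step: "piecewise_constant (radial_step g)"
  unfolding piecewise_constant_def
proof (intro exI[of _ \<int>] conjI allI impI)
  fix a b :: real
  show "finite (\<int> \<inter> {a..b})"
    using finite_int_segment[of a b] by (simp add: Int_def conj_commute)
next
  fix x :: real
  assume "x \<notin> \<int>"
  then have "\<bar>x\<bar> \<notin> \<int>"
    by (cases "x \<ge> 0") auto
  then have "\<forall>\<^sub>F y in at x. \<lfloor>\<bar>y\<bar>\<rfloor> = \<lfloor>\<bar>x\<bar>\<rfloor>"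
    by (intro eventually_floor_eq tendsto_rabs tendsto_ident_at)
  then obtain e where "e > 0" "\<And>y. y \<noteq> x \<Longrightarrow> dist y x < e \<Longrightarrow> \<lfloor>\<bar>y\<bar>\<rfloor> = \<lfloor>\<bar>x\<bar>\<rfloor>"
    by (auto simp: eventually_at)
  then show "\<exists>e>0. \<forall>y. \<bar>y - x\<bar> < e \<longrightarrow> radial_step g y = radial_step g x"
    by (metis dist_real_def radial_step_def)
qed

lemma radial_step_antimono:
  assumes "decseq g" "\<bar>x\<bar> \<le> \<bar>y\<bar>"
  shows "radial_step g y \<le> radial_step g x"
  unfolding radial_step_def
  by (rule decseqD[OF assms(1)]) (intro nat_mono floor_mono assms(2))

lemma radial_step_tendsto_at_top:
  assumes "g \<longlonglongrightarrow> l"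
  shows "(radial_step g \<longlongrightarrow> l) at_top"
proof -
  have "filterlim (\<lambda>x::real. nat \<lfloor>\<bar>x\<bar>\<rfloor>) sequentially at_top"
    by (intro filterlim_compose[OF filterlim_nat_sequentially]
        filterlim_compose[OF filterlim_floor_sequentially] filterlim_abs_real)
  then show ?thesis
    unfolding radial_step_def by (rule filterlim_compose[OF assms])
qed

lemma radial_step_growth:
  assumes "k \<ge> 0" "decseq g" "\<And>n. g n \<ge> 0"
    and g_growth: "\<And>n m. n \<le> m \<Longrightarrow> g n \<le> exp (k * (real m - real n)) * g m"
  shows "radial_step g y \<le> exp k * radial_step g x * exp (k * \<bar>x - y\<bar>)"
proof (cases "\<bar>x\<bar> \<le> \<bar>y\<bar>")
  case True
  have "1 \<le> exp k * exp (k * \<bar>x - y\<bar>)"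
    using assms(1) by (simp flip: exp_add)
  then have "1 * radial_step g x \<le> exp k * exp (k * \<bar>x - y\<bar>) * radial_step g x"
    using assms(3) unfolding radial_step_def by (rule mult_right_mono)
  then show ?thesis
    using radial_step_antimono[OF assms(2) True] by (simp add: mult_ac)
next
  case False
  define n where "n = nat \<lfloor>\<bar>y\<bar>\<rfloor>"
  define m where "m = nat \<lfloor>\<bar>x\<bar>\<rfloor>"
  have "n \<le> m"
    using False unfolding n_def m_def by (intro nat_mono floor_mono) simp
  have "k * (real m - real n) \<le> k * (1 + \<bar>x - y\<bar>)"
    using assms(1) unfolding n_def m_def by (intro mult_left_mono) linarith+
  then have "exp (k * (real m - real n)) \<le> exp k * exp (k * \<bar>x - y\<bar>)"
    by (simp add: algebra_simps flip: exp_add)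
  then have "exp (k * (real m - real n)) * g m \<le> exp k * exp (k * \<bar>x - y\<bar>) * g m"
    using assms(3) by (rule mult_right_mono)
  moreover have "radial_step g y = g n" "radial_step g x = g m"
    by (simp_all add: radial_step_def n_def m_def)
  ultimately show ?thesis
    using g_growth[OF \<open>n \<le> m\<close>] by (simp add: mult_ac)
qed

lemma exists_slowly_varying_radial_majorant:
  fixes \<phi> :: "real \<Rightarrow> real" and \<kappa> :: real
  assumes "\<kappa> > 0" "continuous_on UNIV \<phi>" "\<And>y. \<phi> y \<ge> 0" "(\<phi> \<longlongrightarrow> 0) at_infinity"
  obtains G where "piecewise_constant G" "\<And>x. G x > 0" "\<And>x. \<phi> x \<le> G x"
    "\<And>x. G (- x) = G x" "\<And>x y. \<bar>x\<bar> \<le> \<bar>y\<bar> \<Longrightarrow> G y \<le> G x" "(G \<longlongrightarrow> 0) at_top"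
    "\<And>x y. G y \<le> exp \<kappa> * G x * exp (\<kappa> * \<bar>x - y\<bar>)"
proof -
  have bdd: "bdd_above (range \<phi>)"
    using assms(2,4) by (intro bounded_imp_bdd_above bounded_range_if_tendsto_at_infinity)
  define H where "H = tail_sup \<phi>"
  have H_nonneg: "H n \<ge> 0" for n
    using tail_sup_upper[OF bdd, of n "real n"] assms(3)[of "real n"] by (simp add: H_def)
  have H_decseq: "decseq H"
    unfolding H_def by (rule tail_sup_decseq[OF bdd])
  have H_lim: "H \<longlonglongrightarrow> 0"
    unfolding H_def by (rule tail_sup_tendsto_zero[OF bdd assms(3,4)])
  define g where "g = slow_majorant H \<kappa>"
  have g_pos: "g n > 0" for n
    unfolding g_def using H_nonneg by (rule slow_majorant_pos)
  have g_decseq: "decseq g"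
    unfolding g_def using assms(1) H_nonneg H_decseq by (intro slow_majorant_decseq) auto
  show ?thesis
  proof (rule that[of "radial_step g"])
    show "piecewise_constant (radial_step g)"
      by (rule piecewise_constant_radial_step)
    show "radial_step g x > 0" for x
      using g_pos by (simp add: radial_step_def)
    show "\<phi> x \<le> radial_step g x" for x
    proof -
      have "\<phi> x \<le> H (nat \<lfloor>\<bar>x\<bar>\<rfloor>)"
        unfolding H_def by (rule tail_sup_upper[OF bdd]) linarith
      also have "\<dots> \<le> radial_step g x"
        unfolding radial_step_def g_def by (rule slow_majorant_ge)
      finally show ?thesis .
    qed
    show "radial_step g (- x) = radial_step g x" for x
      by (simp add: radial_step_def)
    show "radial_step g y \<le> radial_step g x" if "\<bar>x\<bar> \<le> \<bar>y\<bar>" for x y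
      using g_decseq that by (rule radial_step_antimono)
    show "(radial_step g \<longlongrightarrow> 0) at_top"
      unfolding g_def using assms(1) H_nonneg H_lim
      by (intro radial_step_tendsto_at_top slow_majorant_tendsto_zero)
    show "radial_step g y \<le> exp \<kappa> * radial_step g x * exp (\<kappa> * \<bar>x - y\<bar>)" for x y
      using assms(1) g_decseq g_pos
      by (intro radial_step_growth) (auto simp: g_def slow_majorant_growth less_imp_le)
  qed
qed

lemma rho_coefficient_le:
  fixes A C :: real
  assumes "0 < A" "A < 1" "C \<ge> 0"
  shows "2*C / (if i = 0 then 1 - A else 2 * real i * A) \<le> (2*C/A + 2*C/(1 - A)) / (1 + real i)"
proof (cases "i = 0")
  case True
  then show ?thesis
    using assms by simp
next
  case False
  have "2*C / (2 * real i * A) = (2*C/A) / (2 * real i)"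
    by simp
  also have "\<dots> \<le> (2*C/A) / (1 + real i)"
    using False assms by (intro divide_left_mono) auto
  also have "\<dots> \<le> (2*C/A + 2*C/(1 - A)) / (1 + real i)"
    using assms by (intro divide_right_mono) auto
  finally show ?thesis
    using False by simp
qed

lemma conv_rho_le:
  fixes A C \<kappa> :: real and G :: "real \<Rightarrow> real"
  assumes "0 < A" "A < 1" "C \<ge> 0" "\<And>x. G x \<ge> 0"
    and "2*\<kappa> \<le> sqrt (2*A)" "2*\<kappa> \<le> sqrt (1 - A)"
    and "\<And>x y. G y \<le> C * G x * exp (\<kappa> * \<bar>x - y\<bar>)"
  shows "conv (rho A i) G x \<le> (2*C/A + 2*C/(1 - A)) / (1 + real i) * G x"
proof -
  define d where "d = (if i = 0 then 1 - A else 2 * real i * A)"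
  have d_pos: "d > 0"
    using assms(1,2) by (simp add: d_def)
  have "sqrt (2*A) \<le> sqrt d" if "i \<noteq> 0"
    using that assms(1) by (simp add: d_def)
  then have "2*\<kappa> \<le> sqrt d"
    using assms(5,6) by (cases "i = 0") (auto simp: d_def intro: order_trans)
  then have "conv (rho A i) G x \<le> 2*C/(sqrt d)^2 * G x"
    unfolding rho_eq_laplace_kernel d_def[symmetric] using d_pos assms(3,4,7)
    by (intro conv_laplace_kernel_le) auto
  also have "\<dots> = 2*C/d * G x"
    using d_pos by simp
  also have "\<dots> \<le> (2*C/A + 2*C/(1 - A)) / (1 + real i) * G x"
    unfolding d_def using rho_coefficient_le[OF assms(1-3)] assms(4)
    by (rule mult_right_mono)
  finally show ?thesis .
qed

theorem mainTheorem5: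
  fixes A :: real and \<theta> :: "real \<Rightarrow> real"
  assumes "0 < A" "A < 1"
    and "continuous_on UNIV \<theta>"
    and "(\<theta> \<longlongrightarrow> 0) at_infinity"
  shows "\<exists>G :: real \<Rightarrow> real.
           piecewise_constant G \<and> (\<forall>x. G x > 0) \<and>
           (\<forall>x. G x \<ge> max \<bar>\<theta> x\<bar> ((\<theta> x)\<^sup>2)) \<and>
           (\<forall>x. G (- x) = G x) \<and>
           (\<forall>x y. 0 \<le> x \<longrightarrow> x \<le> y \<longrightarrow> G y \<le> G x) \<and>
           (G \<longlongrightarrow> 0) at_top \<and>
           (\<exists>\<sigma>>0. \<forall>i::nat. \<forall>x. conv (rho A i) G x \<le> \<sigma> / (1 + real i) * G x)"
proof -
  define \<phi> where "\<phi> = (\<lambda>y. max \<bar>\<theta> y\<bar> ((\<theta> y)\<^sup>2))"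
  have \<phi>_cont: "continuous_on UNIV \<phi>"
    unfolding \<phi>_def using assms(3) by (intro continuous_intros)
  have \<phi>_nonneg: "\<phi> y \<ge> 0" for y
    by (simp add: \<phi>_def)
  have \<phi>_lim: "(\<phi> \<longlongrightarrow> 0) at_infinity"
    unfolding \<phi>_def using tendsto_max[OF tendsto_rabs[OF assms(4)] tendsto_power[OF assms(4), of 2]]
    by simp
  define \<kappa> where "\<kappa> = min (sqrt (2*A)) (sqrt (1 - A)) / 2"
  have "\<kappa> > 0"
    using assms(1,2) by (simp add: \<kappa>_def)
  obtain G where G: "piecewise_constant G" "\<And>x. G x > 0" "\<And>x. \<phi> x \<le> G x"
    "\<And>x. G (- x) = G x" "\<And>x y. \<bar>x\<bar> \<le> \<bar>y\<bar> \<Longrightarrow> G y \<le> G x" "(G \<longlongrightarrow> 0) at_top"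
    "\<And>x y. G y \<le> exp \<kappa> * G x * exp (\<kappa> * \<bar>x - y\<bar>)"
    using exists_slowly_varying_radial_majorant[OF \<open>\<kappa> > 0\<close> \<phi>_cont \<phi>_nonneg \<phi>_lim] by blast
  define \<sigma> where "\<sigma> = 2 * exp \<kappa> / A + 2 * exp \<kappa> / (1 - A)"
  have "\<sigma> > 0"
    using assms(1,2) unfolding \<sigma>_def by (intro add_pos_pos divide_pos_pos) auto
  moreover have "conv (rho A i) G x \<le> \<sigma> / (1 + real i) * G x" for i x
    unfolding \<sigma>_def using assms(1,2) G(2)
    by (intro conv_rho_le[where \<kappa> = \<kappa>] G(7)) (auto simp: \<kappa>_def less_imp_le)
  ultimately show ?thesis
    using G unfolding \<phi>_def by (intro exI[of _ G]) auto
qed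

end
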